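(* Let $d\geqslant2$, $m\geqslant1$ and $f_1,\dots,f_d\in\mathbb{Z}[X_1,\dots,X_m]$. Let $\mathcal{S}=\{(f_1(n),\dots,f_d(n)):n\in\mathbb{Z}^m\}\subseteq\mathbb{Z}^d$. Let $1\leqslant i\leqslant d$ be such that the map $f_i:\mathbb{Z}^m\to\mathbb{Z}$ is surjective, and let $\mathcal{H}_i=\{(x_1,\dots,x_d)\in\mathbb{Z}^d:x_i=0\}$. Then $\mathcal{H}_i$ is a complement of $\mathcal{S}$ in $\mathbb{Z}^d$. Moreover, if $\mathcal{S}\cap\mathcal{H}_i$ contains exactly one element, then $\mathcal{H}_i$ is a minimal complement of $\mathcal{S}$.
   Context: A nonempty $M\subseteq\mathbb{Z}^d$ is a complement of $W$ if $M+W=\mathbb{Z}^d$, and a minimal complement if no proper subset of $M$ is a complement of $W$. *)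

theory Defs
  imports "HOL-Analysis.Analysis"
begin

text \<open>Points of \<open>\<int>^m\<close> are vectors
  indexed by the finite type \<open>'m\<close> (so \<open>m = CARD('m) \<ge> 1\<close>).\<close>
inductive int_poly_fun :: "(int ^ 'm \<Rightarrow> int) \<Rightarrow> bool" where
  const: "int_poly_fun (\<lambda>x. c)"
| var: "int_poly_fun (\<lambda>x. x $ j)"
| add: "int_poly_fun f \<Longrightarrow> int_poly_fun g \<Longrightarrow> int_poly_fun (\<lambda>x. f x + g x)"
| mult: "int_poly_fun f \<Longrightarrow> int_poly_fun g \<Longrightarrow> int_poly_fun (\<lambda>x. f x * g x)"

definition sumset :: "'a::plus set \<Rightarrow> 'a set \<Rightarrow> 'a set" where
  "sumset A B = {a + b | a b. a \<in> A \<and> b \<in> B}"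

definition is_complement :: "'a::plus set \<Rightarrow> 'a set \<Rightarrow> bool" where
  "is_complement M W \<longleftrightarrow> M \<noteq> {} \<and> sumset M W = UNIV"

definition is_minimal_complement :: "'a::plus set \<Rightarrow> 'a set \<Rightarrow> bool" where
  "is_minimal_complement M W \<longleftrightarrow>
     is_complement M W \<and> (\<forall>M'. M' \<subset> M \<longrightarrow> \<not> is_complement M' W)"

end

theory Submission
  imports Defs
begin

text \<open>\<open>\<H>\<^sub>i\<close> is the kernel of the projection \<open>x \<mapsto> x\<^sub>i\<close>, which maps \<open>\<S>\<close> onto \<open>\<int>\<close>.
  Each coset of a kernel meets the image set \<open>\<S>\<close>, so kernel plus \<open>\<S>\<close> is everything.
  If the kernel meets \<open>\<S>\<close> only in \<open>s\<close>, then writing \<open>h + s = m + s'\<close> with \<open>h \<in> \<H>\<^sub>i\<close>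
  forces \<open>s' \<in> \<H>\<^sub>i\<close>, hence \<open>s' = s\<close> and \<open>m = h\<close>: every element of the kernel is
  needed.\<close>

lemma sumset_kernel_eq_UNIV:
  assumes p: "Modules.additive p" and onto: "p ` S = UNIV"
  shows "sumset {x. p x = 0} S = UNIV"
proof (intro set_eqI iffI)
  fix y
  obtain s where s: "s \<in> S" "p s = p y"
    using onto by (metis rangeI image_iff)
  have "y - s \<in> {x. p x = 0}"
    using s(2) by (simp add: additive.diff [OF p])
  moreover have "y = (y - s) + s"
    by simp
  ultimately show "y \<in> sumset {x. p x = 0} S"
    using s(1) unfolding sumset_def by blast
qed simp

lemma kernel_is_complement:
  assumes "Modules.additive p" and "p ` S = UNIV"
  shows "is_complement {x. p x = 0} S"
  using additive.zero [OF assms(1)] sumset_kernel_eq_UNIV [OF assms]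
  unfolding is_complement_def by blast

lemma not_complement_if_subset_kernel:
  assumes p: "Modules.additive p" and single: "S \<inter> {x. p x = 0} = {s}"
    and M: "M \<subset> {x. p x = 0}"
  shows "\<not> is_complement M S"
proof
  assume "is_complement M S"
  obtain h where h: "p h = 0" "h \<notin> M"
    using M by blast
  have "h + s \<in> sumset M S"
    using \<open>is_complement M S\<close> unfolding is_complement_def by simp
  then obtain m s' where decomp: "h + s = m + s'" "m \<in> M" "s' \<in> S"
    unfolding sumset_def by blast
  have "s' = h + s - m"
    using decomp(1) by (simp add: algebra_simps)
  moreover have "p s = 0" "p m = 0"
    using single M decomp(2) by blast+
  ultimately have "p s' = 0"
    using h(1) by (simp add: additive.diff [OF p] additive.add [OF p])
  with decomp(3) single have "s' = s"
    by blast
  then have "m = h"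
    using decomp(1) by simp
  with decomp(2) h(2) show False
    by simp
qed

lemma kernel_is_minimal_complement:
  assumes "Modules.additive p" and "p ` S = UNIV" and "S \<inter> {x. p x = 0} = {s}"
  shows "is_minimal_complement {x. p x = 0} S"
  using kernel_is_complement [OF assms(1,2)] not_complement_if_subset_kernel [OF assms(1,3)]
  unfolding is_minimal_complement_def by blast

lemma additive_vec_nth: "Modules.additive (\<lambda>x :: 'a::ab_group_add ^ 'n. x $ i)"
  by unfold_locales simp

theorem proposition6p2:
  fixes f :: "'d::finite \<Rightarrow> (int ^ 'm::finite \<Rightarrow> int)"
    and i :: 'd
  assumes d2: "CARD('d) \<ge> 2"
    and poly: "\<And>k. int_poly_fun (f k)"
    and surj_i: "surj (f i)"
  defines "S \<equiv> range (\<lambda>n. (\<chi> k. f k n) :: int ^ 'd)"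
    and "H \<equiv> {x :: int ^ 'd. x $ i = 0}"
  shows "is_complement H S \<and> ((\<exists>s. S \<inter> H = {s}) \<longrightarrow> is_minimal_complement H S)"
proof -
  have onto: "(\<lambda>x. x $ i) ` S = UNIV"
    using surj_i unfolding S_def by (simp add: image_image)
  show ?thesis
    using kernel_is_complement [OF additive_vec_nth onto]
      kernel_is_minimal_complement [OF additive_vec_nth onto]
    unfolding H_def by blast
qed

end
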